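(* Let $R$ be an integral domain satisfying (R$_1$) whose integral closure $R'$ is a generalized Krull domain, and such that $P \cap R$ is a height one prime of $R$ for every height one prime $P$ of $R'$. If some maximal ideal of $R$ contains all height one primes of $R$, then $R$ is local.
   Context: "Local" means having a unique maximal ideal. A ring satisfies (R$_1$) if its localization at every height one prime is a valuation domain. A domain $A$ is a generalized Krull domain if (1) $A = \bigcap A_{\mathfrak{p}}$ over all height one primes $\mathfrak{p}$ of $A$, (2) every nonzero element lies in only finitely many height one primes, and (3) $A$ satisfies (R$_1$). *)

theory Defs
  imports "HOL-Computational_Algebra.Polynomial"
begin

text \<open>Rings are modelled as subrings of an ambient field K (the type 'k),
  which is taken to be the fraction field of the rings considered.\<close>

definition subring :: "'k::field set \<Rightarrow> bool" where
  "subring A \<longleftrightarrow> 0 \<in> A \<and> 1 \<in> A \<and> (\<forall>x\<in>A. \<forall>y\<in>A. x + y \<in> A \<and> x * y \<in> A \<and> - x \<in> A)"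

definition is_fraction_field_of :: "'k::field set \<Rightarrow> bool" where
  "is_fraction_field_of A \<longleftrightarrow> (\<forall>x. \<exists>a\<in>A. \<exists>b\<in>A. b \<noteq> 0 \<and> x = a / b)"

definition ideal_in :: "'k::field set \<Rightarrow> 'k set \<Rightarrow> bool" where
  "ideal_in A I \<longleftrightarrow> I \<subseteq> A \<and> 0 \<in> I \<and> (\<forall>x\<in>I. \<forall>y\<in>I. x + y \<in> I) \<and> (\<forall>a\<in>A. \<forall>x\<in>I. a * x \<in> I)"

definition prime_ideal_in :: "'k::field set \<Rightarrow> 'k set \<Rightarrow> bool" where
  "prime_ideal_in A P \<longleftrightarrow> ideal_in A P \<and> P \<noteq> A \<and>
     (\<forall>x\<in>A. \<forall>y\<in>A. x * y \<in> P \<longrightarrow> x \<in> P \<or> y \<in> P)"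

definition maximal_ideal_in :: "'k::field set \<Rightarrow> 'k set \<Rightarrow> bool" where
  "maximal_ideal_in A M \<longleftrightarrow> ideal_in A M \<and> M \<noteq> A \<and>
     (\<forall>J. ideal_in A J \<and> M \<subseteq> J \<longrightarrow> J = M \<or> J = A)"

definition height_one_prime :: "'k::field set \<Rightarrow> 'k set \<Rightarrow> bool" where
  "height_one_prime A P \<longleftrightarrow> prime_ideal_in A P \<and> P \<noteq> {0} \<and>
     (\<forall>Q. prime_ideal_in A Q \<and> Q \<subseteq> P \<longrightarrow> Q = {0} \<or> Q = P)"

definition is_local :: "'k::field set \<Rightarrow> bool" where
  "is_local A \<longleftrightarrow> (\<exists>!M. maximal_ideal_in A M)"

definition localization :: "'k::field set \<Rightarrow> 'k set \<Rightarrow> 'k set" where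
  "localization A P = {a / s | a s. a \<in> A \<and> s \<in> A \<and> s \<notin> P}"

definition valuation_domain :: "'k::field set \<Rightarrow> bool" where
  "valuation_domain V \<longleftrightarrow> subring V \<and> (\<forall>x. x \<noteq> 0 \<longrightarrow> x \<in> V \<or> inverse x \<in> V)"

definition satisfies_R1 :: "'k::field set \<Rightarrow> bool" where
  "satisfies_R1 A \<longleftrightarrow> (\<forall>P. height_one_prime A P \<longrightarrow> valuation_domain (localization A P))"

definition integral_closure :: "'k::field set \<Rightarrow> 'k set" where
  "integral_closure A = {x. \<exists>p. lead_coeff p = 1 \<and> (\<forall>i. coeff p i \<in> A) \<and> poly p x = 0}"

definition generalized_Krull_domain :: "'k::field set \<Rightarrow> bool" where
  "generalized_Krull_domain A \<longleftrightarrow>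
     A = \<Inter> {localization A P | P. height_one_prime A P} \<and>
     (\<forall>a\<in>A. a \<noteq> 0 \<longrightarrow> finite {P. height_one_prime A P \<and> a \<in> P}) \<and>
     satisfies_R1 A"

end

theory Submission
  imports Defs
begin

text \<open>Let \<open>M\<close> be the maximal ideal containing all height one primes of \<open>R\<close>, and let
  \<open>s \<notin> M\<close> be nonzero. For every height one prime \<open>P\<close> of \<open>R'\<close> the contraction \<open>P \<inter> R\<close> lies
  in \<open>M\<close>, so \<open>s \<notin> P\<close> and \<open>1/s \<in> R'\<^sub>P\<close>. As \<open>R'\<close> is the intersection of these localizations,
  \<open>1/s\<close> is integral over \<open>R\<close>, and an inverse of an element of \<open>R\<close> that is integral over \<open>R\<close>
  already lies in \<open>R\<close>. Hence every element outside \<open>M\<close> is a unit, and \<open>M\<close> is the only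
  maximal ideal.\<close>

lemma subring_power_mem:
  assumes "subring A" "x \<in> A"
  shows "x ^ n \<in> A"
  using assms by (induction n) (auto simp: subring_def)

lemma subring_sum_mem:
  assumes "subring A" "\<forall>i\<in>S. f i \<in> A"
  shows "sum f S \<in> A"
  using assms(2)
  by (induction S rule: infinite_finite_induct) (use assms(1) in \<open>auto simp: subring_def\<close>)

lemma subring_subset_integral_closure:
  assumes "subring A"
  shows "A \<subseteq> integral_closure A"
proof
  fix a assume "a \<in> A"
  then have "\<forall>i. coeff [:-a, 1:] i \<in> A"
    using assms by (auto simp: coeff_pCons subring_def split: nat.splits)
  moreover have "lead_coeff [:-a, 1:] = 1" "poly [:-a, 1:] a = 0"
    by simp_all
  ultimately show "a \<in> integral_closure A"
    unfolding integral_closure_def by blast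
qed

text \<open>Multiplying a monic equation of degree \<open>n\<close> for \<open>1/s\<close> by \<open>s\<^sup>n\<close> gives
  \<open>1 = - s * (\<Sum>i<n. c\<^sub>i s\<^bsup>n-i-1\<^esup>)\<close>, exhibiting the inverse of \<open>s\<close> inside \<open>A\<close>.\<close>
lemma inverse_mem_if_integral:
  fixes A :: "'k::field set"
  assumes sub: "subring A" and sA: "s \<in> A" and s0: "s \<noteq> 0"
    and int: "1 / s \<in> integral_closure A"
  shows "1 / s \<in> A"
proof -
  obtain p where lc: "lead_coeff p = 1" and cA: "\<forall>i. coeff p i \<in> A" and pz: "poly p (1/s) = 0"
    using int unfolding integral_closure_def by blast
  define n where "n = degree p"
  define b where "b = - (\<Sum>i<n. coeff p i * s ^ (n - i - 1))"
  have "s ^ n * poly p (1/s) = (\<Sum>i\<le>n. coeff p i * s ^ (n - i))"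
    unfolding poly_altdef n_def[symmetric] sum_distrib_left
  proof (rule sum.cong)
    fix i assume "i \<in> {..n}"
    then have "s ^ n = s ^ (n - i) * s ^ i"
      by (simp add: power_add[symmetric])
    then show "s ^ n * (coeff p i * (1/s) ^ i) = coeff p i * s ^ (n - i)"
      using s0 by (simp add: power_one_over field_simps)
  qed simp
  also have "\<dots> = (\<Sum>i<n. coeff p i * s ^ (n - i)) + 1"
    using lc by (simp add: lessThan_Suc_atMost[symmetric] n_def)
  also have "(\<Sum>i<n. coeff p i * s ^ (n - i)) = s * (\<Sum>i<n. coeff p i * s ^ (n - i - 1))"
    unfolding sum_distrib_left
    by (rule sum.cong) (auto simp: Suc_diff_Suc simp flip: power_Suc)
  finally have "s * b = 1"
    using pz unfolding b_def by (simp add: add_eq_0_iff)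
  then have "b = 1 / s"
    using s0 by (simp add: field_simps)
  moreover have "b \<in> A"
  proof -
    have "(\<Sum>i<n. coeff p i * s ^ (n - i - 1)) \<in> A"
      using sub cA subring_power_mem[OF sub sA] unfolding subring_def
      by (intro subring_sum_mem[OF sub]) blast
    then show ?thesis
      using sub unfolding b_def subring_def by blast
  qed
  ultimately show ?thesis by simp
qed

lemma ideal_in_eq_if_unit_mem:
  assumes "ideal_in A I" "s \<in> I" "s \<noteq> 0" "1 / s \<in> A"
  shows "I = A"
proof -
  have "1 \<in> I"
    using assms unfolding ideal_in_def by (metis divide_self_if times_divide_eq_left mult_1)
  then have "a \<in> I" if "a \<in> A" for a
    using assms(1) that unfolding ideal_in_def by (metis mult.right_neutral)
  then show ?thesis
    using assms(1) unfolding ideal_in_def by blast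
qed

lemma inverse_mem_localization:
  assumes "1 \<in> A" "s \<in> A" "s \<notin> P"
  shows "1 / s \<in> localization A P"
  using assms unfolding localization_def by blast

lemma generalized_Krull_domain_mem:
  assumes "generalized_Krull_domain B" "\<forall>P. height_one_prime B P \<longrightarrow> x \<in> localization B P"
  shows "x \<in> B"
proof -
  have "B = \<Inter> {localization B P | P. height_one_prime B P}"
    using assms(1) unfolding generalized_Krull_domain_def by blast
  with assms(2) show ?thesis by blast
qed

lemma maximal_ideal_in_not_subset:
  assumes "maximal_ideal_in A N" "maximal_ideal_in A M" "N \<noteq> M"
  shows "\<not> N \<subseteq> M"
  using assms unfolding maximal_ideal_in_def by blast

theorem lemma4p1:
  fixes R :: "'k::field set"
  assumes "subring R"
    and "is_fraction_field_of R"
    and "satisfies_R1 R"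
    and "generalized_Krull_domain (integral_closure R)"
    and "\<forall>P. height_one_prime (integral_closure R) P \<longrightarrow> height_one_prime R (P \<inter> R)"
    and "\<exists>M. maximal_ideal_in R M \<and> (\<forall>P. height_one_prime R P \<longrightarrow> P \<subseteq> M)"
  shows "is_local R"
proof -
  obtain M where M: "maximal_ideal_in R M" and MP: "\<forall>P. height_one_prime R P \<longrightarrow> P \<subseteq> M"
    using assms(6) by blast
  have RR': "R \<subseteq> integral_closure R"
    using assms(1) by (rule subring_subset_integral_closure)
  have "N = M" if N: "maximal_ideal_in R N" for N
  proof (rule ccontr)
    assume "N \<noteq> M"
    then obtain s where sN: "s \<in> N" and sM: "s \<notin> M"
      using maximal_ideal_in_not_subset[OF N M] by blast
    have sR: "s \<in> R" and s0: "s \<noteq> 0"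
      using sN sM N M unfolding maximal_ideal_in_def ideal_in_def by auto
    have "1 / s \<in> localization (integral_closure R) P"
      if "height_one_prime (integral_closure R) P" for P
    proof (rule inverse_mem_localization)
      show "1 \<in> integral_closure R" "s \<in> integral_closure R"
        using RR' sR assms(1) unfolding subring_def by auto
      show "s \<notin> P"
        using assms(5) MP that sR sM by blast
    qed
    then have "1 / s \<in> R"
      by (intro inverse_mem_if_integral[OF assms(1) sR s0] generalized_Krull_domain_mem[OF assms(4)]) simp
    then have "N = R"
      using ideal_in_eq_if_unit_mem[OF _ sN s0] N unfolding maximal_ideal_in_def by blast
    then show False
      using N unfolding maximal_ideal_in_def by blast
  qed
  then show ?thesis
    using M unfolding is_local_def by blast
qed

end
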